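(* Let $F:\mathcal A\to\mathcal B$ be a triangle functor between triangulated categories. Then $F$ satisfies condition (WSE) if and only if $F$ is objective. Here (WSE) means: for each morphism $v:Y\to Z$ in $\mathcal A$ such that $F(v)$ is a splitting epimorphism in $\mathcal B$, there exists an object $Z'$ and a morphism $v':Z'\to Y$ in $\mathcal A$ such that $F(vv')$ is an isomorphism in $\mathcal B$.
   Context: $F$ is objective if every morphism $f$ in $\mathcal A$ with $F(f)=0$ factors through an object $K$ with $F(K)=0$. A triangle functor is a pair $(F,\xi)$ with $F$ additive and $\xi:F[1]\to[1]F$ a natural isomorphism such that $F$ sends distinguished triangles $(X,Y,Z,u,v,w)$ to distinguished triangles $(F(X),F(Y),F(Z),F(u),F(v),\xi_XF(w))$. *)

theory Defs
  imports Main
begin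

text \<open>A (pre)triangulated category presented concretely: a set of objects, hom-sets,
  composition (cmp g f = g after f), identities, addition and zero morphisms on hom-sets,
  a shift functor (on objects and morphisms) and a class of distinguished triangles
  (X, Y, Z, u, v, w) with u : X \<rightarrow> Y, v : Y \<rightarrow> Z, w : Z \<rightarrow> X[1].\<close>

record ('o, 'm) tricat =
  Ob :: "'o set"
  Hom :: "'o \<Rightarrow> 'o \<Rightarrow> 'm set"
  cmp :: "'m \<Rightarrow> 'm \<Rightarrow> 'm"
  idm :: "'o \<Rightarrow> 'm"
  addm :: "'m \<Rightarrow> 'm \<Rightarrow> 'm"
  zerom :: "'o \<Rightarrow> 'o \<Rightarrow> 'm"
  shO :: "'o \<Rightarrow> 'o"
  shM :: "'m \<Rightarrow> 'm"
  Dist :: "('o \<times> 'o \<times> 'o \<times> 'm \<times> 'm \<times> 'm) set"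

definition is_category :: "('o, 'm, 'x) tricat_scheme \<Rightarrow> bool" where
  "is_category C \<longleftrightarrow>
     (\<forall>X Y. Hom C X Y \<noteq> {} \<longrightarrow> X \<in> Ob C \<and> Y \<in> Ob C) \<and>
     (\<forall>X\<in>Ob C. idm C X \<in> Hom C X X) \<and>
     (\<forall>X Y Z f g. f \<in> Hom C X Y \<and> g \<in> Hom C Y Z \<longrightarrow> cmp C g f \<in> Hom C X Z) \<and>
     (\<forall>X Y f. f \<in> Hom C X Y \<longrightarrow> cmp C (idm C Y) f = f \<and> cmp C f (idm C X) = f) \<and>
     (\<forall>W X Y Z f g h. f \<in> Hom C W X \<and> g \<in> Hom C X Y \<and> h \<in> Hom C Y Z \<longrightarrow>
        cmp C h (cmp C g f) = cmp C (cmp C h g) f)"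

definition is_iso :: "('o, 'm, 'x) tricat_scheme \<Rightarrow> 'o \<Rightarrow> 'o \<Rightarrow> 'm \<Rightarrow> bool" where
  "is_iso C X Y f \<longleftrightarrow> f \<in> Hom C X Y \<and>
     (\<exists>g \<in> Hom C Y X. cmp C g f = idm C X \<and> cmp C f g = idm C Y)"

definition split_epi :: "('o, 'm, 'x) tricat_scheme \<Rightarrow> 'o \<Rightarrow> 'o \<Rightarrow> 'm \<Rightarrow> bool" where
  "split_epi C X Y f \<longleftrightarrow> f \<in> Hom C X Y \<and> (\<exists>s \<in> Hom C Y X. cmp C f s = idm C Y)"

definition isomorphic_obj :: "('o, 'm, 'x) tricat_scheme \<Rightarrow> 'o \<Rightarrow> 'o \<Rightarrow> bool" where
  "isomorphic_obj C X Y \<longleftrightarrow> (\<exists>f. is_iso C X Y f)"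

definition is_zero_obj :: "('o, 'm, 'x) tricat_scheme \<Rightarrow> 'o \<Rightarrow> bool" where
  "is_zero_obj C Z \<longleftrightarrow> Z \<in> Ob C \<and>
     (\<forall>X\<in>Ob C. (\<exists>!f. f \<in> Hom C Z X) \<and> (\<exists>!f. f \<in> Hom C X Z))"

definition is_additive :: "('o, 'm, 'x) tricat_scheme \<Rightarrow> bool" where
  "is_additive C \<longleftrightarrow> is_category C \<and>
     (\<forall>X\<in>Ob C. \<forall>Y\<in>Ob C.
        zerom C X Y \<in> Hom C X Y \<and>
        (\<forall>f\<in>Hom C X Y. \<forall>g\<in>Hom C X Y. addm C f g \<in> Hom C X Y \<and> addm C f g = addm C g f) \<and>
        (\<forall>f\<in>Hom C X Y. \<forall>g\<in>Hom C X Y. \<forall>h\<in>Hom C X Y.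
            addm C (addm C f g) h = addm C f (addm C g h)) \<and>
        (\<forall>f\<in>Hom C X Y. addm C f (zerom C X Y) = f) \<and>
        (\<forall>f\<in>Hom C X Y. \<exists>g\<in>Hom C X Y. addm C f g = zerom C X Y)) \<and>
     (\<forall>X Y Z f g h. f \<in> Hom C X Y \<and> g \<in> Hom C Y Z \<and> h \<in> Hom C Y Z \<longrightarrow>
        cmp C (addm C g h) f = addm C (cmp C g f) (cmp C h f)) \<and>
     (\<forall>X Y Z f g h. f \<in> Hom C X Y \<and> g \<in> Hom C X Y \<and> h \<in> Hom C Y Z \<longrightarrow>
        cmp C h (addm C f g) = addm C (cmp C h f) (cmp C h g)) \<and>
     (\<exists>Z. is_zero_obj C Z) \<and>
     (\<forall>X\<in>Ob C. \<forall>Y\<in>Ob C. \<exists>S\<in>Ob C. \<exists>i1\<in>Hom C X S. \<exists>i2\<in>Hom C Y S.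
        \<exists>p1\<in>Hom C S X. \<exists>p2\<in>Hom C S Y.
        cmp C p1 i1 = idm C X \<and> cmp C p2 i2 = idm C Y \<and>
        cmp C p2 i1 = zerom C X Y \<and> cmp C p1 i2 = zerom C Y X \<and>
        addm C (cmp C i1 p1) (cmp C i2 p2) = idm C S)"

definition negm :: "('o, 'm, 'x) tricat_scheme \<Rightarrow> 'o \<Rightarrow> 'o \<Rightarrow> 'm \<Rightarrow> 'm" where
  "negm C X Y f = (THE g. g \<in> Hom C X Y \<and> addm C f g = zerom C X Y)"

definition is_triangle :: "('o, 'm, 'x) tricat_scheme \<Rightarrow> 'o \<times> 'o \<times> 'o \<times> 'm \<times> 'm \<times> 'm \<Rightarrow> bool" where
  "is_triangle C T \<longleftrightarrow> (case T of (X, Y, Z, u, v, w) \<Rightarrow>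
     X \<in> Ob C \<and> Y \<in> Ob C \<and> Z \<in> Ob C \<and>
     u \<in> Hom C X Y \<and> v \<in> Hom C Y Z \<and> w \<in> Hom C Z (shO C X))"

definition tri_morph :: "('o, 'm, 'x) tricat_scheme \<Rightarrow> 'o \<times> 'o \<times> 'o \<times> 'm \<times> 'm \<times> 'm
     \<Rightarrow> 'o \<times> 'o \<times> 'o \<times> 'm \<times> 'm \<times> 'm \<Rightarrow> 'm \<Rightarrow> 'm \<Rightarrow> 'm \<Rightarrow> bool" where
  "tri_morph C T T' a b c \<longleftrightarrow> (case T of (X, Y, Z, u, v, w) \<Rightarrow> case T' of (X', Y', Z', u', v', w') \<Rightarrow>
     a \<in> Hom C X X' \<and> b \<in> Hom C Y Y' \<and> c \<in> Hom C Z Z' \<and>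
     cmp C b u = cmp C u' a \<and> cmp C c v = cmp C v' b \<and> cmp C (shM C a) w = cmp C w' c)"

definition tri_iso :: "('o, 'm, 'x) tricat_scheme \<Rightarrow> 'o \<times> 'o \<times> 'o \<times> 'm \<times> 'm \<times> 'm
     \<Rightarrow> 'o \<times> 'o \<times> 'o \<times> 'm \<times> 'm \<times> 'm \<Rightarrow> bool" where
  "tri_iso C T T' \<longleftrightarrow> (case T of (X, Y, Z, u, v, w) \<Rightarrow> case T' of (X', Y', Z', u', v', w') \<Rightarrow>
     (\<exists>a b c. tri_morph C T T' a b c \<and> is_iso C X X' a \<and> is_iso C Y Y' b \<and> is_iso C Z Z' c))"

definition is_triangulated :: "('o, 'm, 'x) tricat_scheme \<Rightarrow> bool" where
  "is_triangulated C \<longleftrightarrow> is_additive C \<and>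
     \<comment> \<open>shift: additive functor which is an equivalence\<close>
     (\<forall>X\<in>Ob C. shO C X \<in> Ob C \<and> shM C (idm C X) = idm C (shO C X)) \<and>
     (\<forall>X Y Z f g. f \<in> Hom C X Y \<and> g \<in> Hom C Y Z \<longrightarrow>
        shM C (cmp C g f) = cmp C (shM C g) (shM C f)) \<and>
     (\<forall>X\<in>Ob C. \<forall>Y\<in>Ob C. bij_betw (shM C) (Hom C X Y) (Hom C (shO C X) (shO C Y)) \<and>
        (\<forall>f\<in>Hom C X Y. \<forall>g\<in>Hom C X Y. shM C (addm C f g) = addm C (shM C f) (shM C g))) \<and>
     (\<forall>Y\<in>Ob C. \<exists>X\<in>Ob C. isomorphic_obj C (shO C X) Y) \<and>
     \<comment> \<open>TR1\<close>
     (\<forall>T\<in>Dist C. is_triangle C T) \<and>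
     (\<forall>T T'. T \<in> Dist C \<and> is_triangle C T' \<and> tri_iso C T' T \<longrightarrow> T' \<in> Dist C) \<and>
     (\<forall>X\<in>Ob C. \<forall>Z. is_zero_obj C Z \<longrightarrow>
        (X, X, Z, idm C X, zerom C X Z, zerom C Z (shO C X)) \<in> Dist C) \<and>
     (\<forall>X\<in>Ob C. \<forall>Y\<in>Ob C. \<forall>u\<in>Hom C X Y. \<exists>Z v w. (X, Y, Z, u, v, w) \<in> Dist C) \<and>
     \<comment> \<open>TR2 (rotation)\<close>
     (\<forall>X Y Z u v w. is_triangle C (X, Y, Z, u, v, w) \<longrightarrow>
        ((X, Y, Z, u, v, w) \<in> Dist C \<longleftrightarrow>
         (Y, Z, shO C X, v, w, negm C (shO C X) (shO C Y) (shM C u)) \<in> Dist C)) \<and>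
     \<comment> \<open>TR3\<close>
     (\<forall>X Y Z u v w X' Y' Z' u' v' w' a b.
        (X, Y, Z, u, v, w) \<in> Dist C \<and> (X', Y', Z', u', v', w') \<in> Dist C \<and>
        a \<in> Hom C X X' \<and> b \<in> Hom C Y Y' \<and> cmp C b u = cmp C u' a \<longrightarrow>
        (\<exists>c. tri_morph C (X, Y, Z, u, v, w) (X', Y', Z', u', v', w') a b c)) \<and>
     \<comment> \<open>TR4 (octahedral axiom)\<close>
     (\<forall>X Y Z u v Z' j k X' l i Y' m n.
        (X, Y, Z', u, j, k) \<in> Dist C \<and> (Y, Z, X', v, l, i) \<in> Dist C \<and>
        (X, Z, Y', cmp C v u, m, n) \<in> Dist C \<longrightarrow>
        (\<exists>f g. (Z', Y', X', f, g, cmp C (shM C j) i) \<in> Dist C \<and>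
           cmp C f j = cmp C m v \<and> cmp C n f = k \<and>
           cmp C g m = l \<and> cmp C i g = cmp C (shM C u) n))"

definition is_triangle_functor :: "('o, 'm, 'x) tricat_scheme \<Rightarrow> ('p, 'n, 'y) tricat_scheme \<Rightarrow>
     ('o \<Rightarrow> 'p) \<Rightarrow> ('m \<Rightarrow> 'n) \<Rightarrow> ('o \<Rightarrow> 'n) \<Rightarrow> bool" where
  "is_triangle_functor A B FO FM \<xi> \<longleftrightarrow>
     (\<forall>X\<in>Ob A. FO X \<in> Ob B \<and> FM (idm A X) = idm B (FO X)) \<and>
     (\<forall>X Y f. f \<in> Hom A X Y \<longrightarrow> FM f \<in> Hom B (FO X) (FO Y)) \<and>
     (\<forall>X Y Z f g. f \<in> Hom A X Y \<and> g \<in> Hom A Y Z \<longrightarrow> FM (cmp A g f) = cmp B (FM g) (FM f)) \<and>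
     (\<forall>X Y f g. f \<in> Hom A X Y \<and> g \<in> Hom A X Y \<longrightarrow> FM (addm A f g) = addm B (FM f) (FM g)) \<and>
     (\<forall>X\<in>Ob A. is_iso B (FO (shO A X)) (shO B (FO X)) (\<xi> X)) \<and>
     (\<forall>X Y f. f \<in> Hom A X Y \<longrightarrow>
        cmp B (\<xi> Y) (FM (shM A f)) = cmp B (shM B (FM f)) (\<xi> X)) \<and>
     (\<forall>X Y Z u v w. (X, Y, Z, u, v, w) \<in> Dist A \<longrightarrow>
        (FO X, FO Y, FO Z, FM u, FM v, cmp B (\<xi> X) (FM w)) \<in> Dist B)"

definition objective :: "('o, 'm, 'x) tricat_scheme \<Rightarrow> ('p, 'n, 'y) tricat_scheme \<Rightarrow>
     ('o \<Rightarrow> 'p) \<Rightarrow> ('m \<Rightarrow> 'n) \<Rightarrow> bool" where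
  "objective A B FO FM \<longleftrightarrow>
     (\<forall>X Y f. f \<in> Hom A X Y \<and> FM f = zerom B (FO X) (FO Y) \<longrightarrow>
        (\<exists>K\<in>Ob A. is_zero_obj B (FO K) \<and>
           (\<exists>g\<in>Hom A X K. \<exists>h\<in>Hom A K Y. f = cmp A h g)))"

definition WSE :: "('o, 'm, 'x) tricat_scheme \<Rightarrow> ('p, 'n, 'y) tricat_scheme \<Rightarrow>
     ('o \<Rightarrow> 'p) \<Rightarrow> ('m \<Rightarrow> 'n) \<Rightarrow> bool" where
  "WSE A B FO FM \<longleftrightarrow>
     (\<forall>Y Z v. v \<in> Hom A Y Z \<and> split_epi B (FO Y) (FO Z) (FM v) \<longrightarrow>
        (\<exists>Z'\<in>Ob A. \<exists>v'\<in>Hom A Z' Y. is_iso B (FO Z') (FO Z) (FM (cmp A v v'))))"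

end

theory Submission
  imports Defs
begin

text \<open>Complete a morphism \<open>f : X \<rightarrow> Y\<close> to a distinguished triangle \<open>X \<rightarrow> Y \<rightarrow> Z \<rightarrow> X[1]\<close>.

  If \<open>F f = 0\<close>, the rotated image triangle has zero third morphism, so \<open>F w\<close> is a split
  epimorphism. (WSE) yields \<open>k = w w' : Z' \<rightarrow> X[1]\<close> with \<open>F k\<close> invertible; the cone \<open>C\<close> of
  \<open>k\<close> is then killed by \<open>F\<close>. Since \<open>f[1] w = 0\<close>, also \<open>f[1] k = 0\<close>, so \<open>f[1]\<close> factors
  through \<open>X[1] \<rightarrow> C\<close>, and desuspending gives a factorisation of \<open>f\<close> through an object
  \<open>K\<close> with \<open>K[1] \<cong> C\<close>, hence \<open>F K = 0\<close>.

  Conversely, if \<open>F v\<close> is a split epimorphism for the triangle \<open>Y \<rightarrow> Z \<rightarrow> C\<close> of \<open>v\<close>, then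
  \<open>F\<close> kills \<open>a : Z \<rightarrow> C\<close>, so objectivity factors \<open>a = h g\<close> through some \<open>K\<close> with \<open>F K = 0\<close>.
  Completing \<open>g\<close> backwards to a triangle \<open>Z' \<rightarrow> Z \<rightarrow> K\<close> gives \<open>v'' : Z' \<rightarrow> Z\<close> with
  \<open>a v'' = 0\<close>, hence \<open>v'' = v v'\<close>, and \<open>F v''\<close> is invertible because its cone \<open>F K\<close> is zero.\<close>

locale triangulated_category =
  fixes C :: "('o, 'm, 'x) tricat_scheme"
  assumes triangulated: "is_triangulated C"
begin

lemma additive: "is_additive C"
  using triangulated unfolding is_triangulated_def by blast

lemma category: "is_category C"
  using additive unfolding is_additive_def by blast

lemma Hom_objects: "f \<in> Hom C X Y \<Longrightarrow> X \<in> Ob C \<and> Y \<in> Ob C"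
  using category unfolding is_category_def by blast

lemma idm_in_Hom: "X \<in> Ob C \<Longrightarrow> idm C X \<in> Hom C X X"
  using category unfolding is_category_def by blast

lemma cmp_in_Hom: "f \<in> Hom C X Y \<Longrightarrow> g \<in> Hom C Y Z \<Longrightarrow> cmp C g f \<in> Hom C X Z"
  using category unfolding is_category_def by blast

lemma cmp_idm_left: "f \<in> Hom C X Y \<Longrightarrow> cmp C (idm C Y) f = f"
  using category unfolding is_category_def by blast

lemma cmp_idm_right: "f \<in> Hom C X Y \<Longrightarrow> cmp C f (idm C X) = f"
  using category unfolding is_category_def by blast

lemma cmp_assoc:
  "f \<in> Hom C W X \<Longrightarrow> g \<in> Hom C X Y \<Longrightarrow> h \<in> Hom C Y Z \<Longrightarrow>
   cmp C h (cmp C g f) = cmp C (cmp C h g) f"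
  using category unfolding is_category_def by blast

lemma zerom_in_Hom: "X \<in> Ob C \<Longrightarrow> Y \<in> Ob C \<Longrightarrow> zerom C X Y \<in> Hom C X Y"
  using additive unfolding is_additive_def by blast

lemma addm_in_Hom: "f \<in> Hom C X Y \<Longrightarrow> g \<in> Hom C X Y \<Longrightarrow> addm C f g \<in> Hom C X Y"
  using additive Hom_objects[of f X Y] unfolding is_additive_def by (elim conjE) blast

lemma addm_commute: "f \<in> Hom C X Y \<Longrightarrow> g \<in> Hom C X Y \<Longrightarrow> addm C f g = addm C g f"
  using additive Hom_objects[of f X Y] unfolding is_additive_def by (elim conjE) blast

lemma addm_assoc:
  "f \<in> Hom C X Y \<Longrightarrow> g \<in> Hom C X Y \<Longrightarrow> h \<in> Hom C X Y \<Longrightarrow>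
   addm C (addm C f g) h = addm C f (addm C g h)"
  using additive Hom_objects[of f X Y] unfolding is_additive_def by (elim conjE) blast

lemma addm_zerom_right: "f \<in> Hom C X Y \<Longrightarrow> addm C f (zerom C X Y) = f"
  using additive Hom_objects[of f X Y] unfolding is_additive_def by (elim conjE) blast

lemma addm_inverse_exists: "f \<in> Hom C X Y \<Longrightarrow> \<exists>g\<in>Hom C X Y. addm C f g = zerom C X Y"
  using additive Hom_objects[of f X Y] unfolding is_additive_def by (elim conjE) blast

lemma cmp_addm_left:
  "f \<in> Hom C X Y \<Longrightarrow> g \<in> Hom C Y Z \<Longrightarrow> h \<in> Hom C Y Z \<Longrightarrow>
   cmp C (addm C g h) f = addm C (cmp C g f) (cmp C h f)"
  using additive unfolding is_additive_def by (elim conjE) metis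

lemma cmp_addm_right:
  "f \<in> Hom C X Y \<Longrightarrow> g \<in> Hom C X Y \<Longrightarrow> h \<in> Hom C Y Z \<Longrightarrow>
   cmp C h (addm C f g) = addm C (cmp C h f) (cmp C h g)"
  using additive unfolding is_additive_def by (elim conjE) metis

lemma zero_obj_exists: "\<exists>E. is_zero_obj C E"
  using additive unfolding is_additive_def by blast

lemma shO_in_Ob: "X \<in> Ob C \<Longrightarrow> shO C X \<in> Ob C"
  using triangulated unfolding is_triangulated_def by (elim conjE) blast

lemma shM_idm: "X \<in> Ob C \<Longrightarrow> shM C (idm C X) = idm C (shO C X)"
  using triangulated unfolding is_triangulated_def by (elim conjE) blast

lemma shM_cmp:
  "f \<in> Hom C X Y \<Longrightarrow> g \<in> Hom C Y Z \<Longrightarrow> shM C (cmp C g f) = cmp C (shM C g) (shM C f)"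
  using triangulated unfolding is_triangulated_def by (elim conjE) blast

lemma shM_bij_betw:
  "X \<in> Ob C \<Longrightarrow> Y \<in> Ob C \<Longrightarrow> bij_betw (shM C) (Hom C X Y) (Hom C (shO C X) (shO C Y))"
  using triangulated unfolding is_triangulated_def by (elim conjE) blast

lemma shM_addm:
  "f \<in> Hom C X Y \<Longrightarrow> g \<in> Hom C X Y \<Longrightarrow> shM C (addm C f g) = addm C (shM C f) (shM C g)"
  using triangulated Hom_objects[of f X Y] unfolding is_triangulated_def by (elim conjE) blast

lemma shO_essentially_surjective: "Y \<in> Ob C \<Longrightarrow> \<exists>X\<in>Ob C. \<exists>f. is_iso C (shO C X) Y f"
  using triangulated unfolding is_triangulated_def isomorphic_obj_def by (elim conjE) blast

lemma Dist_triangle: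
  "(X, Y, Z, u, v, w) \<in> Dist C \<Longrightarrow> X \<in> Ob C \<and> Y \<in> Ob C \<and> Z \<in> Ob C \<and>
     u \<in> Hom C X Y \<and> v \<in> Hom C Y Z \<and> w \<in> Hom C Z (shO C X)"
  using triangulated unfolding is_triangulated_def is_triangle_def by (elim conjE) fastforce

lemma Dist_closed_tri_iso: "T \<in> Dist C \<Longrightarrow> is_triangle C T' \<Longrightarrow> tri_iso C T' T \<Longrightarrow> T' \<in> Dist C"
  using triangulated unfolding is_triangulated_def by (elim conjE) blast

lemma Dist_trivial:
  "is_zero_obj C E \<Longrightarrow> X \<in> Ob C \<Longrightarrow>
   (X, X, E, idm C X, zerom C X E, zerom C E (shO C X)) \<in> Dist C"
  using triangulated unfolding is_triangulated_def by (elim conjE) blast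

lemma Dist_exists:
  assumes "u \<in> Hom C X Y" shows "\<exists>Z v w. (X, Y, Z, u, v, w) \<in> Dist C"
proof -
  have "\<forall>X\<in>Ob C. \<forall>Y\<in>Ob C. \<forall>u\<in>Hom C X Y. \<exists>Z v w. (X, Y, Z, u, v, w) \<in> Dist C"
    using triangulated unfolding is_triangulated_def by (elim conjE) assumption
  then show ?thesis using assms Hom_objects[OF assms] by blast
qed

lemma Dist_rotate_iff:
  assumes "is_triangle C (X, Y, Z, u, v, w)"
  shows "(X, Y, Z, u, v, w) \<in> Dist C \<longleftrightarrow>
    (Y, Z, shO C X, v, w, negm C (shO C X) (shO C Y) (shM C u)) \<in> Dist C"
proof -
  have "\<forall>X Y Z u v w. is_triangle C (X, Y, Z, u, v, w) \<longrightarrow>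
      ((X, Y, Z, u, v, w) \<in> Dist C \<longleftrightarrow>
       (Y, Z, shO C X, v, w, negm C (shO C X) (shO C Y) (shM C u)) \<in> Dist C)"
    using triangulated unfolding is_triangulated_def by (elim conjE) assumption
  then show ?thesis using assms by blast
qed

lemma Dist_rotate:
  "(X, Y, Z, u, v, w) \<in> Dist C \<Longrightarrow>
   (Y, Z, shO C X, v, w, negm C (shO C X) (shO C Y) (shM C u)) \<in> Dist C"
  using Dist_rotate_iff Dist_triangle unfolding is_triangle_def by blast

lemma Dist_morphism_exists:
  assumes "(X, Y, Z, u, v, w) \<in> Dist C" and "(X', Y', Z', u', v', w') \<in> Dist C"
    and "a \<in> Hom C X X'" and "b \<in> Hom C Y Y'" and "cmp C b u = cmp C u' a"
  shows "\<exists>c. tri_morph C (X, Y, Z, u, v, w) (X', Y', Z', u', v', w') a b c"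
proof -
  have "\<forall>X Y Z u v w X' Y' Z' u' v' w' a b.
      (X, Y, Z, u, v, w) \<in> Dist C \<and> (X', Y', Z', u', v', w') \<in> Dist C \<and>
      a \<in> Hom C X X' \<and> b \<in> Hom C Y Y' \<and> cmp C b u = cmp C u' a \<longrightarrow>
      (\<exists>c. tri_morph C (X, Y, Z, u, v, w) (X', Y', Z', u', v', w') a b c)"
    using triangulated unfolding is_triangulated_def by (elim conjE) assumption
  then show ?thesis using assms by blast
qed

subsection \<open>Hom groups and the shift\<close>

lemma zerom_if_addm_eq_self:
  assumes f: "f \<in> Hom C X Y" and g: "g \<in> Hom C X Y" and e: "addm C f g = f"
  shows "g = zerom C X Y"
proof -
  obtain n where n: "n \<in> Hom C X Y" "addm C f n = zerom C X Y"
    using addm_inverse_exists f by blast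
  have "g = addm C g (addm C f n)" using addm_zerom_right g n by simp
  also have "\<dots> = addm C (addm C f g) n" using addm_assoc[OF g f n(1)] addm_commute[OF f g] by simp
  finally show ?thesis using e n by simp
qed

lemma cmp_zerom_right:
  assumes h: "h \<in> Hom C Y Z" and X: "X \<in> Ob C"
  shows "cmp C h (zerom C X Y) = zerom C X Z"
proof -
  have z: "zerom C X Y \<in> Hom C X Y" using zerom_in_Hom X Hom_objects[OF h] by blast
  have "cmp C h (zerom C X Y) = addm C (cmp C h (zerom C X Y)) (cmp C h (zerom C X Y))"
    using cmp_addm_right[OF z z h] addm_zerom_right[OF z] by simp
  then show ?thesis using zerom_if_addm_eq_self cmp_in_Hom[OF z h] by metis
qed

lemma cmp_zerom_left:
  assumes f: "f \<in> Hom C X Y" and Z: "Z \<in> Ob C"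
  shows "cmp C (zerom C Y Z) f = zerom C X Z"
proof -
  have z: "zerom C Y Z \<in> Hom C Y Z" using zerom_in_Hom Z Hom_objects[OF f] by blast
  have "cmp C (zerom C Y Z) f = addm C (cmp C (zerom C Y Z) f) (cmp C (zerom C Y Z) f)"
    using cmp_addm_left[OF f z z] addm_zerom_right[OF z] by simp
  then show ?thesis using zerom_if_addm_eq_self cmp_in_Hom[OF f z] by metis
qed

lemma addm_zerom_left:
  assumes g: "g \<in> Hom C X Y" shows "addm C (zerom C X Y) g = g"
proof -
  have "zerom C X Y \<in> Hom C X Y" using zerom_in_Hom Hom_objects[OF g] by blast
  then show ?thesis using addm_commute[OF _ g] addm_zerom_right[OF g] by simp
qed

lemma addm_inverse_unique:
  assumes f: "f \<in> Hom C X Y" and g: "g \<in> Hom C X Y" and g': "g' \<in> Hom C X Y"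
    and e: "addm C f g = zerom C X Y" and e': "addm C f g' = zerom C X Y"
  shows "g = g'"
proof -
  have "g = addm C g (addm C f g')" using addm_zerom_right g e' by simp
  also have "\<dots> = addm C (addm C f g) g'" using addm_assoc[OF g f g'] addm_commute[OF f g] by simp
  finally show ?thesis using e addm_zerom_left[OF g'] by simp
qed

lemma negm_spec:
  assumes f: "f \<in> Hom C X Y"
  shows "negm C X Y f \<in> Hom C X Y \<and> addm C f (negm C X Y f) = zerom C X Y"
proof -
  obtain g where g: "g \<in> Hom C X Y" "addm C f g = zerom C X Y"
    using addm_inverse_exists[OF f] by blast
  have "\<exists>!g. g \<in> Hom C X Y \<and> addm C f g = zerom C X Y"
  proof (rule ex1I[of _ g])
    show "g \<in> Hom C X Y \<and> addm C f g = zerom C X Y" using g by blast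
    show "h = g" if "h \<in> Hom C X Y \<and> addm C f h = zerom C X Y" for h
      using addm_inverse_unique[OF f _ g(1) _ g(2)] that by blast
  qed
  then show ?thesis unfolding negm_def by (rule theI')
qed

lemma negm_in_Hom: "f \<in> Hom C X Y \<Longrightarrow> negm C X Y f \<in> Hom C X Y"
  using negm_spec by blast

lemma addm_negm: "f \<in> Hom C X Y \<Longrightarrow> addm C f (negm C X Y f) = zerom C X Y"
  using negm_spec by blast

lemma negm_unique:
  assumes f: "f \<in> Hom C X Y" and g: "g \<in> Hom C X Y" and e: "addm C f g = zerom C X Y"
  shows "negm C X Y f = g"
  using addm_inverse_unique[OF f negm_in_Hom[OF f] g addm_negm[OF f] e] .

lemma negm_negm:
  assumes f: "f \<in> Hom C X Y" shows "negm C X Y (negm C X Y f) = f"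
  using negm_unique[OF negm_in_Hom[OF f] f] addm_commute[OF negm_in_Hom[OF f] f] addm_negm[OF f]
  by simp

lemma negm_zerom:
  assumes "X \<in> Ob C" "Y \<in> Ob C" shows "negm C X Y (zerom C X Y) = zerom C X Y"
  using negm_unique[OF zerom_in_Hom[OF assms] zerom_in_Hom[OF assms]]
    addm_zerom_right[OF zerom_in_Hom[OF assms]] by blast

lemma negm_inject:
  assumes f: "f \<in> Hom C X Y" and g: "g \<in> Hom C X Y" and e: "negm C X Y f = negm C X Y g"
  shows "f = g"
proof -
  have "f = negm C X Y (negm C X Y f)" using negm_negm[OF f] by simp
  also have "\<dots> = g" using e negm_negm[OF g] by simp
  finally show ?thesis .
qed

lemma negm_eq_zerom_iff:
  assumes f: "f \<in> Hom C X Y" shows "negm C X Y f = zerom C X Y \<longleftrightarrow> f = zerom C X Y"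
proof -
  have "negm C X Y f = negm C X Y (zerom C X Y) \<longleftrightarrow> f = zerom C X Y"
    using negm_inject[OF f zerom_in_Hom] Hom_objects[OF f] by blast
  then show ?thesis using negm_zerom Hom_objects[OF f] by simp
qed

lemma eq_if_addm_negm_eq_zerom:
  assumes f: "f \<in> Hom C X Y" and g: "g \<in> Hom C X Y"
    and e: "addm C f (negm C X Y g) = zerom C X Y"
  shows "f = g"
  using negm_inject[OF f g negm_unique[OF f negm_in_Hom[OF g] e]] .

lemma cmp_negm_left:
  assumes f: "f \<in> Hom C X Y" and g: "g \<in> Hom C Y Z"
  shows "cmp C (negm C Y Z g) f = negm C X Z (cmp C g f)"
proof -
  have "addm C (cmp C g f) (cmp C (negm C Y Z g) f) = cmp C (addm C g (negm C Y Z g)) f"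
    using cmp_addm_left[OF f g negm_in_Hom[OF g]] by simp
  also have "\<dots> = zerom C X Z" using addm_negm[OF g] cmp_zerom_left[OF f] Hom_objects[OF g] by simp
  finally show ?thesis
    using negm_unique[OF cmp_in_Hom[OF f g] cmp_in_Hom[OF f negm_in_Hom[OF g]]] by simp
qed

lemma cmp_negm_right:
  assumes f: "f \<in> Hom C X Y" and h: "h \<in> Hom C Y Z"
  shows "cmp C h (negm C X Y f) = negm C X Z (cmp C h f)"
proof -
  have "addm C (cmp C h f) (cmp C h (negm C X Y f)) = cmp C h (addm C f (negm C X Y f))"
    using cmp_addm_right[OF f negm_in_Hom[OF f] h] by simp
  also have "\<dots> = zerom C X Z" using addm_negm[OF f] cmp_zerom_right[OF h] Hom_objects[OF f] by simp
  finally show ?thesis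
    using negm_unique[OF cmp_in_Hom[OF f h] cmp_in_Hom[OF negm_in_Hom[OF f] h]] by simp
qed

lemma shM_in_Hom: "f \<in> Hom C X Y \<Longrightarrow> shM C f \<in> Hom C (shO C X) (shO C Y)"
  using bij_betwE[OF shM_bij_betw] Hom_objects[of f X Y] by blast

lemma shM_inject: "f \<in> Hom C X Y \<Longrightarrow> g \<in> Hom C X Y \<Longrightarrow> shM C f = shM C g \<Longrightarrow> f = g"
  using inj_onD[OF bij_betw_imp_inj_on[OF shM_bij_betw]] Hom_objects[of f X Y] by blast

lemma shM_surj:
  assumes "X \<in> Ob C" "Y \<in> Ob C" "g \<in> Hom C (shO C X) (shO C Y)"
  shows "\<exists>f\<in>Hom C X Y. shM C f = g"
  using shM_bij_betw[OF assms(1,2)] assms(3) unfolding bij_betw_def by (metis imageE)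

lemma shM_zerom:
  assumes X: "X \<in> Ob C" and Y: "Y \<in> Ob C"
  shows "shM C (zerom C X Y) = zerom C (shO C X) (shO C Y)"
proof -
  have z: "zerom C X Y \<in> Hom C X Y" using zerom_in_Hom X Y by blast
  have "shM C (zerom C X Y) = addm C (shM C (zerom C X Y)) (shM C (zerom C X Y))"
    using shM_addm[OF z z] addm_zerom_right[OF z] by simp
  then show ?thesis using zerom_if_addm_eq_self shM_in_Hom[OF z] by metis
qed

subsection \<open>Zero objects\<close>

lemma zero_obj_in_Ob: "is_zero_obj C E \<Longrightarrow> E \<in> Ob C"
  unfolding is_zero_obj_def by blast

lemma zero_obj_from_unique:
  assumes E: "is_zero_obj C E" and f: "f \<in> Hom C E X" shows "f = zerom C E X"
proof -
  have "\<exists>!f. f \<in> Hom C E X" using E Hom_objects[OF f] unfolding is_zero_obj_def by blast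
  then show ?thesis using f zerom_in_Hom Hom_objects[OF f] by blast
qed

lemma zero_obj_to_unique:
  assumes E: "is_zero_obj C E" and f: "f \<in> Hom C X E" shows "f = zerom C X E"
proof -
  have "\<exists>!f. f \<in> Hom C X E" using E Hom_objects[OF f] unfolding is_zero_obj_def by blast
  then show ?thesis using f zerom_in_Hom Hom_objects[OF f] by blast
qed

lemma zero_objI:
  assumes E: "E \<in> Ob C" and i: "idm C E = zerom C E E"
  shows "is_zero_obj C E"
  unfolding is_zero_obj_def
proof (intro conjI ballI E)
  fix X assume X: "X \<in> Ob C"
  have "f = zerom C E X" if "f \<in> Hom C E X" for f
    using cmp_idm_right[OF that] i cmp_zerom_right[OF that E] by simp
  then show "\<exists>!f. f \<in> Hom C E X" using zerom_in_Hom[OF E X] by blast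
  have "f = zerom C X E" if "f \<in> Hom C X E" for f
    using cmp_idm_left[OF that] i cmp_zerom_left[OF that E] by simp
  then show "\<exists>!f. f \<in> Hom C X E" using zerom_in_Hom[OF X E] by blast
qed

lemma zero_obj_idm: "is_zero_obj C E \<Longrightarrow> idm C E = zerom C E E"
  using zero_obj_from_unique idm_in_Hom zero_obj_in_Ob by blast

lemma zero_obj_iso_target:
  assumes E: "is_zero_obj C E" and f: "is_iso C E W f"
  shows "is_zero_obj C W"
proof -
  obtain g where fh: "f \<in> Hom C E W" and g: "g \<in> Hom C W E" "cmp C f g = idm C W"
    using f unfolding is_iso_def by blast
  have W: "W \<in> Ob C" using Hom_objects[OF fh] by blast
  have "idm C W = zerom C W W"
    using g zero_obj_to_unique[OF E g(1)] cmp_zerom_right[OF fh W] by simp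
  then show ?thesis using zero_objI W by blast
qed

lemma zero_obj_iso_source:
  assumes E: "is_zero_obj C E" and f: "is_iso C W E f"
  shows "is_zero_obj C W"
proof -
  obtain g where fh: "f \<in> Hom C W E" and g: "g \<in> Hom C E W" "cmp C g f = idm C W"
    using f unfolding is_iso_def by blast
  have W: "W \<in> Ob C" using Hom_objects[OF fh] by blast
  have "idm C W = zerom C W W"
    using g zero_obj_to_unique[OF E fh] cmp_zerom_right[OF g(1) W] by simp
  then show ?thesis using zero_objI W by blast
qed

lemma zero_obj_shO:
  assumes E: "is_zero_obj C E" shows "is_zero_obj C (shO C E)"
proof -
  have "idm C (shO C E) = zerom C (shO C E) (shO C E)"
    using shM_idm zero_obj_idm[OF E] shM_zerom zero_obj_in_Ob[OF E] by metis
  then show ?thesis using zero_objI shO_in_Ob zero_obj_in_Ob[OF E] by blast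
qed

lemma zero_obj_if_shO_zero_obj:
  assumes X: "X \<in> Ob C" and E: "is_zero_obj C (shO C X)"
  shows "is_zero_obj C X"
proof -
  have "shM C (idm C X) = shM C (zerom C X X)"
    using shM_idm[OF X] zero_obj_idm[OF E] shM_zerom[OF X X] by simp
  then have "idm C X = zerom C X X" using shM_inject idm_in_Hom[OF X] zerom_in_Hom[OF X X] by blast
  then show ?thesis using zero_objI X by blast
qed

lemma is_iso_idm: "X \<in> Ob C \<Longrightarrow> is_iso C X X (idm C X)"
  unfolding is_iso_def using idm_in_Hom cmp_idm_left by blast

subsection \<open>Distinguished triangles\<close>

lemma Dist_cmp_zerom:
  assumes D: "(X, Y, Z, u, v, w) \<in> Dist C"
  shows "cmp C v u = zerom C X Z"
proof -
  have X: "X \<in> Ob C" and u: "u \<in> Hom C X Y" using Dist_triangle[OF D] by auto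
  obtain E where E: "is_zero_obj C E" using zero_obj_exists by blast
  obtain c where "tri_morph C (X, X, E, idm C X, zerom C X E, zerom C E (shO C X))
      (X, Y, Z, u, v, w) (idm C X) u c"
    using Dist_morphism_exists[OF Dist_trivial[OF E X] D idm_in_Hom[OF X] u] cmp_idm_right[OF u]
    by auto
  then have "c \<in> Hom C E Z" and "cmp C c (zerom C X E) = cmp C v u"
    unfolding tri_morph_def by auto
  then show ?thesis using cmp_zerom_right X by metis
qed

lemma Dist_cmp_shM_zerom:
  assumes D: "(X, Y, Z, u, v, w) \<in> Dist C"
  shows "cmp C (shM C u) w = zerom C Z (shO C Y)"
proof -
  have u: "u \<in> Hom C X Y" and w: "w \<in> Hom C Z (shO C X)" using Dist_triangle[OF D] by auto
  have "negm C Z (shO C Y) (cmp C (shM C u) w) = zerom C Z (shO C Y)"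
    using Dist_cmp_zerom[OF Dist_rotate[OF Dist_rotate[OF D]]] cmp_negm_left[OF w shM_in_Hom[OF u]]
    by simp
  then show ?thesis using negm_eq_zerom_iff cmp_in_Hom[OF w shM_in_Hom[OF u]] by blast
qed

text \<open>Exactness of the Hom sequences at \<open>Y\<close>; both halves come from TR3 applied to a
  rotated trivial triangle.\<close>

lemma Dist_factor_through_first:
  assumes D: "(X, Y, Z, u, v, w) \<in> Dist C" and g: "g \<in> Hom C W Y"
    and vg: "cmp C v g = zerom C W Z"
  shows "\<exists>h\<in>Hom C W X. g = cmp C u h"
proof -
  have X: "X \<in> Ob C" and u: "u \<in> Hom C X Y" and Z: "Z \<in> Ob C"
    using Dist_triangle[OF D] by auto
  have W: "W \<in> Ob C" using Hom_objects[OF g] by blast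
  obtain E where E: "is_zero_obj C E" using zero_obj_exists by blast
  have Eo: "E \<in> Ob C" using zero_obj_in_Ob[OF E] .
  have "cmp C (zerom C E Z) (zerom C W E) = cmp C v g"
    using cmp_zerom_left[OF zerom_in_Hom[OF W Eo] Z] vg by simp
  then obtain c where "tri_morph C (W, E, shO C W, zerom C W E, zerom C E (shO C W),
      negm C (shO C W) (shO C W) (shM C (idm C W)))
      (Y, Z, shO C X, v, w, negm C (shO C X) (shO C Y) (shM C u)) g (zerom C E Z) c"
    using Dist_morphism_exists[OF Dist_rotate[OF Dist_trivial[OF E W]] Dist_rotate[OF D] g
        zerom_in_Hom[OF Eo Z]] by blast
  then have c: "c \<in> Hom C (shO C W) (shO C X)" and
    eq: "cmp C (shM C g) (negm C (shO C W) (shO C W) (shM C (idm C W)))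
       = cmp C (negm C (shO C X) (shO C Y) (shM C u)) c"
    unfolding tri_morph_def by auto
  have sg: "shM C g \<in> Hom C (shO C W) (shO C Y)" using shM_in_Hom[OF g] .
  have su: "shM C u \<in> Hom C (shO C X) (shO C Y)" using shM_in_Hom[OF u] .
  have "negm C (shO C W) (shO C Y) (shM C g) = negm C (shO C W) (shO C Y) (cmp C (shM C u) c)"
    using eq shM_idm[OF W] cmp_negm_right[OF idm_in_Hom[OF shO_in_Ob[OF W]] sg]
      cmp_idm_right[OF sg] cmp_negm_left[OF c su] by simp
  then have "shM C g = cmp C (shM C u) c" using negm_inject[OF sg cmp_in_Hom[OF c su]] by blast
  moreover obtain h where h: "h \<in> Hom C W X" "shM C h = c" using shM_surj[OF W X c] by blast
  ultimately have "shM C g = shM C (cmp C u h)" using shM_cmp[OF h(1) u] by simp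
  then show ?thesis using shM_inject[OF g cmp_in_Hom[OF h(1) u]] h(1) by blast
qed

lemma Dist_factor_through_second:
  assumes D: "(X, Y, Z, u, v, w) \<in> Dist C" and g: "g \<in> Hom C Y W"
    and gu: "cmp C g u = zerom C X W"
  shows "\<exists>h\<in>Hom C Z W. g = cmp C h v"
proof -
  have X: "X \<in> Ob C" using Dist_triangle[OF D] by auto
  have W: "W \<in> Ob C" using Hom_objects[OF g] by blast
  obtain E where E: "is_zero_obj C E" using zero_obj_exists by blast
  have Eo: "E \<in> Ob C" using zero_obj_in_Ob[OF E] .
  have E1: "is_zero_obj C (shO C E)" using zero_obj_shO[OF E] .
  have "is_triangle C (E, W, W, zerom C E W, idm C W, zerom C W (shO C E))"
    unfolding is_triangle_def using Eo W zerom_in_Hom idm_in_Hom shO_in_Ob by auto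
  moreover have "negm C (shO C E) (shO C W) (shM C (zerom C E W)) = zerom C (shO C E) (shO C W)"
    using zero_obj_from_unique[OF E1 negm_in_Hom[OF shM_in_Hom[OF zerom_in_Hom[OF Eo W]]]] .
  ultimately have T: "(E, W, W, zerom C E W, idm C W, zerom C W (shO C E)) \<in> Dist C"
    using Dist_rotate_iff Dist_trivial[OF E1 W] by simp
  have "cmp C g u = cmp C (zerom C E W) (zerom C X E)"
    using cmp_zerom_left[OF zerom_in_Hom[OF X Eo] W] gu by simp
  then obtain c where "tri_morph C (X, Y, Z, u, v, w)
      (E, W, W, zerom C E W, idm C W, zerom C W (shO C E)) (zerom C X E) g c"
    using Dist_morphism_exists[OF D T zerom_in_Hom[OF X Eo] g] by blast
  then have "c \<in> Hom C Z W" "cmp C c v = cmp C (idm C W) g" unfolding tri_morph_def by auto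
  then show ?thesis using cmp_idm_left[OF g] by auto
qed

lemma Dist_replace_third:
  assumes D: "(X, Y, Z, u, v, w) \<in> Dist C" and \<phi>: "is_iso C Z' Z \<phi>"
    and \<phi>': "\<phi>' \<in> Hom C Z Z'" "cmp C \<phi> \<phi>' = idm C Z"
  shows "(X, Y, Z', u, cmp C \<phi>' v, cmp C w \<phi>) \<in> Dist C"
proof -
  have h: "X \<in> Ob C" "Y \<in> Ob C" "u \<in> Hom C X Y" "v \<in> Hom C Y Z" "w \<in> Hom C Z (shO C X)"
    using Dist_triangle[OF D] by auto
  have \<phi>h: "\<phi> \<in> Hom C Z' Z" using \<phi> unfolding is_iso_def by blast
  have "cmp C \<phi> (cmp C \<phi>' v) = v"
    using cmp_assoc[OF h(4) \<phi>'(1) \<phi>h] \<phi>'(2) cmp_idm_left[OF h(4)] by simp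
  then have "tri_morph C (X, Y, Z', u, cmp C \<phi>' v, cmp C w \<phi>) (X, Y, Z, u, v, w)
      (idm C X) (idm C Y) \<phi>"
    unfolding tri_morph_def
    using idm_in_Hom h \<phi>h shM_idm[OF h(1)] cmp_idm_left cmp_idm_right cmp_in_Hom[OF \<phi>h h(5)]
    by auto
  then have "tri_iso C (X, Y, Z', u, cmp C \<phi>' v, cmp C w \<phi>) (X, Y, Z, u, v, w)"
    unfolding tri_iso_def using is_iso_idm h(1,2) \<phi> by auto
  moreover have "is_triangle C (X, Y, Z', u, cmp C \<phi>' v, cmp C w \<phi>)"
    unfolding is_triangle_def using h \<phi>h \<phi>'(1) cmp_in_Hom Hom_objects[OF \<phi>h] by blast
  ultimately show ?thesis using Dist_closed_tri_iso[OF D] by blast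
qed

text \<open>To rotate backwards, first replace the cone \<open>M\<close> by a desuspended copy \<open>Z'[1]\<close>.\<close>

lemma Dist_exists_with_second:
  assumes D: "(Z, K, M, g, p, q) \<in> Dist C"
  shows "\<exists>Z' v r. Z' \<in> Ob C \<and> (Z', Z, K, v, g, r) \<in> Dist C"
proof -
  have h: "Z \<in> Ob C" "K \<in> Ob C" "M \<in> Ob C" "g \<in> Hom C Z K" "p \<in> Hom C K M"
    "q \<in> Hom C M (shO C Z)"
    using Dist_triangle[OF D] by auto
  obtain Z' \<phi> where Z': "Z' \<in> Ob C" and \<phi>: "is_iso C (shO C Z') M \<phi>"
    using shO_essentially_surjective[OF h(3)] by blast
  obtain \<phi>' where \<phi>h: "\<phi> \<in> Hom C (shO C Z') M" and \<phi>': "\<phi>' \<in> Hom C M (shO C Z')"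
    "cmp C \<phi> \<phi>' = idm C M"
    using \<phi> unfolding is_iso_def by blast
  have q\<phi>: "cmp C q \<phi> \<in> Hom C (shO C Z') (shO C Z)" using cmp_in_Hom \<phi>h h(6) by blast
  obtain v where v: "v \<in> Hom C Z' Z" "shM C v = negm C (shO C Z') (shO C Z) (cmp C q \<phi>)"
    using shM_surj[OF Z' h(1) negm_in_Hom[OF q\<phi>]] by blast
  have r: "cmp C \<phi>' p \<in> Hom C K (shO C Z')" using cmp_in_Hom h(5) \<phi>'(1) by blast
  have "is_triangle C (Z', Z, K, v, g, cmp C \<phi>' p)"
    unfolding is_triangle_def using Z' h v r by auto
  moreover have "negm C (shO C Z') (shO C Z) (shM C v) = cmp C q \<phi>"
    using v(2) negm_negm[OF q\<phi>] by simp
  ultimately have "(Z', Z, K, v, g, cmp C \<phi>' p) \<in> Dist C"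
    using Dist_rotate_iff Dist_replace_third[OF D \<phi> \<phi>'] by simp
  then show ?thesis using Z' by blast
qed

lemma Dist_split_epi_if_third_zerom:
  assumes D: "(X, Y, Z, u, v, w) \<in> Dist C" and w0: "w = zerom C Z (shO C X)"
  shows "split_epi C Y Z v"
proof -
  have Z: "Z \<in> Ob C" and v: "v \<in> Hom C Y Z" and w: "w \<in> Hom C Z (shO C X)"
    using Dist_triangle[OF D] by auto
  have "cmp C w (idm C Z) = zerom C Z (shO C X)" using cmp_idm_right[OF w] w0 by simp
  then obtain s where "s \<in> Hom C Z Y" "idm C Z = cmp C v s"
    using Dist_factor_through_first[OF Dist_rotate[OF D] idm_in_Hom[OF Z]] by blast
  then show ?thesis unfolding split_epi_def using v by auto
qed

lemma Dist_iso_if_zero_third: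
  assumes D: "(X, Y, Z, u, v, w) \<in> Dist C" and E: "is_zero_obj C Z"
  shows "is_iso C X Y u"
proof -
  have h: "X \<in> Ob C" "Y \<in> Ob C" "u \<in> Hom C X Y" "v \<in> Hom C Y Z" "w \<in> Hom C Z (shO C X)"
    using Dist_triangle[OF D] by auto
  have X1: "shO C X \<in> Ob C" using shO_in_Ob[OF h(1)] .
  have iX: "idm C X \<in> Hom C X X" using idm_in_Hom[OF h(1)] .
  have "cmp C v (idm C Y) = zerom C Y Z" using zero_obj_to_unique[OF E] cmp_in_Hom idm_in_Hom h by blast
  then obtain s where s: "s \<in> Hom C Y X" "idm C Y = cmp C u s"
    using Dist_factor_through_first[OF D idm_in_Hom[OF h(2)]] by blast
  have su: "cmp C s u \<in> Hom C X X" using cmp_in_Hom h(3) s(1) by blast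
  define m where "m = addm C (cmp C s u) (negm C X X (idm C X))"
  have m: "m \<in> Hom C X X" unfolding m_def using addm_in_Hom su negm_in_Hom[OF iX] by blast
  txt \<open>\<open>u m = 0\<close>, so \<open>m[1]\<close> factors through \<open>w : Z \<rightarrow> X[1]\<close> with \<open>Z = 0\<close>; hence \<open>s u = 1\<close>.\<close>
  have "cmp C u m = addm C (cmp C u (cmp C s u)) (cmp C u (negm C X X (idm C X)))"
    unfolding m_def using cmp_addm_right[OF su negm_in_Hom[OF iX] h(3)] .
  also have "\<dots> = addm C u (negm C X Y u)"
    using cmp_assoc[OF h(3) s(1) h(3)] s(2) cmp_idm_left[OF h(3)] cmp_negm_right[OF iX h(3)]
      cmp_idm_right[OF h(3)] by simp
  finally have um: "cmp C u m = zerom C X Y" using addm_negm[OF h(3)] by simp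
  have "cmp C (negm C (shO C X) (shO C Y) (shM C u)) (shM C m) = zerom C (shO C X) (shO C Y)"
    using cmp_negm_left[OF shM_in_Hom[OF m] shM_in_Hom[OF h(3)]] shM_cmp[OF m h(3)] um
      shM_zerom[OF h(1,2)] negm_zerom[OF X1 shO_in_Ob[OF h(2)]] by simp
  then obtain k where k: "k \<in> Hom C (shO C X) Z" "shM C m = cmp C w k"
    using Dist_factor_through_first[OF Dist_rotate[OF Dist_rotate[OF D]] shM_in_Hom[OF m]] by blast
  have "shM C m = shM C (zerom C X X)"
    using k zero_obj_to_unique[OF E k(1)] cmp_zerom_right[OF h(5) X1] shM_zerom[OF h(1) h(1)] by simp
  then have "m = zerom C X X" using shM_inject[OF m zerom_in_Hom[OF h(1) h(1)]] by blast
  then have "cmp C s u = idm C X" using eq_if_addm_negm_eq_zerom[OF su iX] unfolding m_def by blast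
  then show ?thesis unfolding is_iso_def using h(3) s by auto
qed

lemma Dist_zero_third_if_iso:
  assumes D: "(X, Y, Z, u, v, w) \<in> Dist C" and I: "is_iso C X Y u"
  shows "is_zero_obj C Z"
proof -
  have h: "X \<in> Ob C" "Z \<in> Ob C" "u \<in> Hom C X Y" "v \<in> Hom C Y Z" "w \<in> Hom C Z (shO C X)"
    using Dist_triangle[OF D] by auto
  obtain u' where u': "u' \<in> Hom C Y X" "cmp C u' u = idm C X" "cmp C u u' = idm C Y"
    using I unfolding is_iso_def by blast
  have "v = cmp C (cmp C v u) u'"
    using u'(3) cmp_idm_right[OF h(4)] cmp_assoc[OF u'(1) h(3) h(4)] by simp
  then have v0: "v = zerom C Y Z"
    using Dist_cmp_zerom[OF D] cmp_zerom_left[OF u'(1) h(2)] by simp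
  have "w = cmp C (shM C (cmp C u' u)) w" using u'(2) shM_idm[OF h(1)] cmp_idm_left[OF h(5)] by simp
  also have "\<dots> = cmp C (shM C u') (cmp C (shM C u) w)"
    using shM_cmp[OF h(3) u'(1)] cmp_assoc[OF h(5) shM_in_Hom[OF h(3)] shM_in_Hom[OF u'(1)]] by simp
  finally have "w = zerom C Z (shO C X)"
    using Dist_cmp_shM_zerom[OF D] cmp_zerom_right[OF shM_in_Hom[OF u'(1)] h(2)] by simp
  then obtain s where s: "s \<in> Hom C Z Y" "idm C Z = cmp C v s"
    using Dist_split_epi_if_third_zerom[OF D] unfolding split_epi_def by metis
  then have "idm C Z = zerom C Z Z" using v0 cmp_zerom_left[OF s(1) h(2)] by simp
  then show ?thesis using zero_objI h(2) by blast
qed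

lemma factorization_through_desuspension:
  assumes f: "f \<in> Hom C X Y" and a: "a \<in> Hom C (shO C X) M" and c: "c \<in> Hom C M (shO C Y)"
    and fac: "shM C f = cmp C c a" and K: "K \<in> Ob C" and \<psi>: "is_iso C (shO C K) M \<psi>"
  shows "\<exists>a'\<in>Hom C X K. \<exists>c'\<in>Hom C K Y. f = cmp C c' a'"
proof -
  have X: "X \<in> Ob C" and Y: "Y \<in> Ob C" using Hom_objects[OF f] by auto
  obtain \<psi>' where \<psi>h: "\<psi> \<in> Hom C (shO C K) M" and \<psi>': "\<psi>' \<in> Hom C M (shO C K)"
    "cmp C \<psi> \<psi>' = idm C M"
    using \<psi> unfolding is_iso_def by blast
  obtain a' where a': "a' \<in> Hom C X K" "shM C a' = cmp C \<psi>' a"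
    using shM_surj[OF X K cmp_in_Hom[OF a \<psi>'(1)]] by blast
  obtain c' where c': "c' \<in> Hom C K Y" "shM C c' = cmp C c \<psi>"
    using shM_surj[OF K Y cmp_in_Hom[OF \<psi>h c]] by blast
  have "shM C (cmp C c' a') = cmp C (cmp C c \<psi>) (cmp C \<psi>' a)"
    using shM_cmp[OF a'(1) c'(1)] a' c' by simp
  also have "\<dots> = cmp C c (cmp C (cmp C \<psi> \<psi>') a)"
    using cmp_assoc[OF cmp_in_Hom[OF a \<psi>'(1)] \<psi>h c] cmp_assoc[OF a \<psi>'(1) \<psi>h] by simp
  also have "\<dots> = shM C f" using \<psi>'(2) cmp_idm_left[OF a] fac by simp
  finally have "f = cmp C c' a'" using shM_inject[OF f cmp_in_Hom[OF a'(1) c'(1)]] by simp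
  then show ?thesis using a'(1) c'(1) by blast
qed

end

subsection \<open>Triangle functors\<close>

locale triangle_functor = A: triangulated_category A + B: triangulated_category B
  for A :: "('o, 'm, 'x) tricat_scheme" and B :: "('p, 'n, 'y) tricat_scheme" +
  fixes FO :: "'o \<Rightarrow> 'p" and FM :: "'m \<Rightarrow> 'n" and \<xi> :: "'o \<Rightarrow> 'n"
  assumes triangle_functor: "is_triangle_functor A B FO FM \<xi>"
begin

lemma F_Ob: "X \<in> Ob A \<Longrightarrow> FO X \<in> Ob B"
  using triangle_functor unfolding is_triangle_functor_def by (elim conjE) blast

lemma F_idm: "X \<in> Ob A \<Longrightarrow> FM (idm A X) = idm B (FO X)"
  using triangle_functor unfolding is_triangle_functor_def by (elim conjE) blast

lemma F_Hom: "f \<in> Hom A X Y \<Longrightarrow> FM f \<in> Hom B (FO X) (FO Y)"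
  using triangle_functor unfolding is_triangle_functor_def by (elim conjE) blast

lemma F_cmp: "f \<in> Hom A X Y \<Longrightarrow> g \<in> Hom A Y Z \<Longrightarrow> FM (cmp A g f) = cmp B (FM g) (FM f)"
  using triangle_functor unfolding is_triangle_functor_def by (elim conjE) blast

lemma F_addm: "f \<in> Hom A X Y \<Longrightarrow> g \<in> Hom A X Y \<Longrightarrow> FM (addm A f g) = addm B (FM f) (FM g)"
  using triangle_functor unfolding is_triangle_functor_def by (elim conjE) blast

lemma xi_iso: "X \<in> Ob A \<Longrightarrow> is_iso B (FO (shO A X)) (shO B (FO X)) (\<xi> X)"
  using triangle_functor unfolding is_triangle_functor_def by (elim conjE) blast

lemma xi_natural:
  "f \<in> Hom A X Y \<Longrightarrow> cmp B (\<xi> Y) (FM (shM A f)) = cmp B (shM B (FM f)) (\<xi> X)"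
  using triangle_functor unfolding is_triangle_functor_def by (elim conjE) blast

lemma F_Dist:
  assumes "(X, Y, Z, u, v, w) \<in> Dist A"
  shows "(FO X, FO Y, FO Z, FM u, FM v, cmp B (\<xi> X) (FM w)) \<in> Dist B"
proof -
  have "\<forall>X Y Z u v w. (X, Y, Z, u, v, w) \<in> Dist A \<longrightarrow>
      (FO X, FO Y, FO Z, FM u, FM v, cmp B (\<xi> X) (FM w)) \<in> Dist B"
    using triangle_functor unfolding is_triangle_functor_def by (elim conjE) assumption
  then show ?thesis using assms by blast
qed

lemma F_zerom:
  assumes X: "X \<in> Ob A" and Y: "Y \<in> Ob A"
  shows "FM (zerom A X Y) = zerom B (FO X) (FO Y)"
proof -
  have z: "zerom A X Y \<in> Hom A X Y" using A.zerom_in_Hom X Y by blast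
  have "FM (zerom A X Y) = addm B (FM (zerom A X Y)) (FM (zerom A X Y))"
    using F_addm[OF z z] A.addm_zerom_right[OF z] by simp
  then show ?thesis using B.zerom_if_addm_eq_self F_Hom[OF z] by metis
qed

lemma F_negm:
  assumes f: "f \<in> Hom A X Y" shows "FM (negm A X Y f) = negm B (FO X) (FO Y) (FM f)"
proof -
  have "addm B (FM f) (FM (negm A X Y f)) = zerom B (FO X) (FO Y)"
    using F_addm[OF f A.negm_in_Hom[OF f]] A.addm_negm[OF f] F_zerom A.Hom_objects[OF f] by simp
  then show ?thesis using B.negm_unique[OF F_Hom[OF f] F_Hom[OF A.negm_in_Hom[OF f]]] by simp
qed

lemma F_is_iso: "is_iso A X Y f \<Longrightarrow> is_iso B (FO X) (FO Y) (FM f)"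
  unfolding is_iso_def using F_Hom F_cmp F_idm A.Hom_objects by metis

lemma F_shM_zerom:
  assumes f: "f \<in> Hom A X Y" and Ff: "FM f = zerom B (FO X) (FO Y)"
  shows "FM (shM A f) = zerom B (FO (shO A X)) (FO (shO A Y))"
proof -
  have X: "X \<in> Ob A" and Y: "Y \<in> Ob A" using A.Hom_objects[OF f] by auto
  obtain \<xi>' where \<xi>Y: "\<xi> Y \<in> Hom B (FO (shO A Y)) (shO B (FO Y))"
    and \<xi>': "\<xi>' \<in> Hom B (shO B (FO Y)) (FO (shO A Y))" "cmp B \<xi>' (\<xi> Y) = idm B (FO (shO A Y))"
    using xi_iso[OF Y] unfolding is_iso_def by blast
  have \<xi>X: "\<xi> X \<in> Hom B (FO (shO A X)) (shO B (FO X))"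
    using xi_iso[OF X] unfolding is_iso_def by blast
  have Fsf: "FM (shM A f) \<in> Hom B (FO (shO A X)) (FO (shO A Y))"
    using F_Hom[OF A.shM_in_Hom[OF f]] .
  have "cmp B (\<xi> Y) (FM (shM A f)) = zerom B (FO (shO A X)) (shO B (FO Y))"
    using xi_natural[OF f] Ff B.shM_zerom[OF F_Ob[OF X] F_Ob[OF Y]]
      B.cmp_zerom_left[OF \<xi>X B.shO_in_Ob[OF F_Ob[OF Y]]] by simp
  then have "FM (shM A f) = cmp B \<xi>' (zerom B (FO (shO A X)) (shO B (FO Y)))"
    using B.cmp_assoc[OF Fsf \<xi>Y \<xi>'(1)] \<xi>'(2) B.cmp_idm_left[OF Fsf] by simp
  then show ?thesis using B.cmp_zerom_right[OF \<xi>'(1) F_Ob[OF A.shO_in_Ob[OF X]]] by simp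
qed

lemma zero_obj_F_if_zero_obj_F_shO:
  assumes K: "K \<in> Ob A" and E: "is_zero_obj B (FO (shO A K))"
  shows "is_zero_obj B (FO K)"
  using B.zero_obj_if_shO_zero_obj[OF F_Ob[OF K] B.zero_obj_iso_target[OF E xi_iso[OF K]]] .

lemma F_third_split_epi_if_F_zerom:
  assumes D: "(X, Y, Z, f, v, w) \<in> Dist A" and Ff: "FM f = zerom B (FO X) (FO Y)"
  shows "split_epi B (FO Z) (FO (shO A X)) (FM w)"
proof -
  have X: "X \<in> Ob A" and Y: "Y \<in> Ob A" and f: "f \<in> Hom A X Y"
    using A.Dist_triangle[OF D] by auto
  have X1: "FO (shO A X) \<in> Ob B" and Y1: "FO (shO A Y) \<in> Ob B"
    using F_Ob A.shO_in_Ob X Y by auto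
  have \<xi>Y: "\<xi> Y \<in> Hom B (FO (shO A Y)) (shO B (FO Y))"
    using xi_iso[OF Y] unfolding is_iso_def by blast
  have "FM (negm A (shO A X) (shO A Y) (shM A f)) = zerom B (FO (shO A X)) (FO (shO A Y))"
    using F_negm[OF A.shM_in_Hom[OF f]] F_shM_zerom[OF f Ff] B.negm_zerom[OF X1 Y1] by simp
  then have "cmp B (\<xi> Y) (FM (negm A (shO A X) (shO A Y) (shM A f)))
      = zerom B (FO (shO A X)) (shO B (FO Y))"
    using B.cmp_zerom_right[OF \<xi>Y X1] by simp
  then show ?thesis using B.Dist_split_epi_if_third_zerom[OF F_Dist[OF A.Dist_rotate[OF D]]] by simp
qed

lemma F_second_zerom_if_F_first_split_epi:
  assumes D: "(Y, Z, M, v, a, b) \<in> Dist A" and se: "split_epi B (FO Y) (FO Z) (FM v)"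
  shows "FM a = zerom B (FO Z) (FO M)"
proof -
  have Y: "Y \<in> Ob A" and M: "M \<in> Ob A" and v: "v \<in> Hom A Y Z" and a: "a \<in> Hom A Z M"
    using A.Dist_triangle[OF D] by auto
  obtain s where s: "s \<in> Hom B (FO Z) (FO Y)" "cmp B (FM v) s = idm B (FO Z)"
    using se unfolding split_epi_def by blast
  have "FM a = cmp B (FM a) (cmp B (FM v) s)" using s(2) B.cmp_idm_right[OF F_Hom[OF a]] by simp
  also have "\<dots> = cmp B (FM (cmp A a v)) s"
    using B.cmp_assoc[OF s(1) F_Hom[OF v] F_Hom[OF a]] F_cmp[OF v a] by simp
  also have "\<dots> = zerom B (FO Z) (FO M)"
    using A.Dist_cmp_zerom[OF D] F_zerom[OF Y M] B.cmp_zerom_left[OF s(1) F_Ob[OF M]] by simp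
  finally show ?thesis .
qed

lemma objective_if_WSE:
  assumes WSE: "WSE A B FO FM" shows "objective A B FO FM"
  unfolding objective_def
proof (intro allI impI)
  fix X Y f assume "f \<in> Hom A X Y \<and> FM f = zerom B (FO X) (FO Y)"
  then have f: "f \<in> Hom A X Y" and Ff: "FM f = zerom B (FO X) (FO Y)" by auto
  have X: "X \<in> Ob A" and Y: "Y \<in> Ob A" using A.Hom_objects[OF f] by auto
  obtain Z v w where D: "(X, Y, Z, f, v, w) \<in> Dist A" using A.Dist_exists[OF f] by blast
  have w: "w \<in> Hom A Z (shO A X)" using A.Dist_triangle[OF D] by auto
  obtain Z' w' where w': "w' \<in> Hom A Z' Z"
    and Fk: "is_iso B (FO Z') (FO (shO A X)) (FM (cmp A w w'))"
    using WSE w F_third_split_epi_if_F_zerom[OF D Ff] unfolding WSE_def by blast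
  obtain M a b where Dk: "(Z', shO A X, M, cmp A w w', a, b) \<in> Dist A"
    using A.Dist_exists[OF A.cmp_in_Hom[OF w' w]] by blast
  have M: "M \<in> Ob A" and a: "a \<in> Hom A (shO A X) M" using A.Dist_triangle[OF Dk] by auto
  have FM0: "is_zero_obj B (FO M)" using B.Dist_zero_third_if_iso[OF F_Dist[OF Dk] Fk] .
  have "cmp A (shM A f) (cmp A w w') = zerom A Z' (shO A Y)"
    using A.Dist_cmp_shM_zerom[OF D] A.cmp_assoc[OF w' w A.shM_in_Hom[OF f]]
      A.cmp_zerom_left[OF w' A.shO_in_Ob[OF Y]] by simp
  then obtain c where c: "c \<in> Hom A M (shO A Y)" "shM A f = cmp A c a"
    using A.Dist_factor_through_second[OF Dk A.shM_in_Hom[OF f]] by blast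
  obtain K \<psi> where K: "K \<in> Ob A" and \<psi>: "is_iso A (shO A K) M \<psi>"
    using A.shO_essentially_surjective[OF M] by blast
  have "is_zero_obj B (FO K)"
    using zero_obj_F_if_zero_obj_F_shO[OF K B.zero_obj_iso_source[OF FM0 F_is_iso[OF \<psi>]]] .
  then show "\<exists>K\<in>Ob A. is_zero_obj B (FO K) \<and> (\<exists>g\<in>Hom A X K. \<exists>h\<in>Hom A K Y. f = cmp A h g)"
    using A.factorization_through_desuspension[OF f a c(1) c(2) K \<psi>] K by blast
qed

lemma WSE_if_objective:
  assumes obj: "objective A B FO FM" shows "WSE A B FO FM"
  unfolding WSE_def
proof (intro allI impI)
  fix Y Z v assume "v \<in> Hom A Y Z \<and> split_epi B (FO Y) (FO Z) (FM v)"
  then have v: "v \<in> Hom A Y Z" and se: "split_epi B (FO Y) (FO Z) (FM v)" by auto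
  obtain M a b where D: "(Y, Z, M, v, a, b) \<in> Dist A" using A.Dist_exists[OF v] by blast
  have a: "a \<in> Hom A Z M" using A.Dist_triangle[OF D] by auto
  obtain K g h where K: "is_zero_obj B (FO K)" and g: "g \<in> Hom A Z K" and h: "h \<in> Hom A K M"
    and agh: "a = cmp A h g"
    using obj a F_second_zerom_if_F_first_split_epi[OF D se] unfolding objective_def by blast
  obtain N p q where "(Z, K, N, g, p, q) \<in> Dist A" using A.Dist_exists[OF g] by blast
  then obtain Z' v'' r where Z': "Z' \<in> Ob A" and D': "(Z', Z, K, v'', g, r) \<in> Dist A"
    using A.Dist_exists_with_second by blast
  have v'': "v'' \<in> Hom A Z' Z" using A.Dist_triangle[OF D'] by auto
  have "cmp A a v'' = zerom A Z' M"
    using agh A.cmp_assoc[OF v'' g h] A.Dist_cmp_zerom[OF D'] A.cmp_zerom_right[OF h Z'] by simp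
  then obtain v' where "v' \<in> Hom A Z' Y" "v'' = cmp A v v'"
    using A.Dist_factor_through_first[OF D v''] by blast
  moreover have "is_iso B (FO Z') (FO Z) (FM v'')"
    using B.Dist_iso_if_zero_third[OF F_Dist[OF D'] K] .
  ultimately show "\<exists>Z'\<in>Ob A. \<exists>v'\<in>Hom A Z' Y. is_iso B (FO Z') (FO Z) (FM (cmp A v v'))"
    using Z' by auto
qed

end

theorem theorem1:
  fixes A :: "('o, 'm) tricat" and B :: "('p, 'n) tricat"
    and FO :: "'o \<Rightarrow> 'p" and FM :: "'m \<Rightarrow> 'n" and \<xi> :: "'o \<Rightarrow> 'n"
  assumes "is_triangulated A" and "is_triangulated B"
    and "is_triangle_functor A B FO FM \<xi>"
  shows "WSE A B FO FM \<longleftrightarrow> objective A B FO FM"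
proof -
  interpret triangle_functor A B FO FM \<xi>
    using assms by (simp add: triangle_functor_def triangle_functor_axioms_def triangulated_category_def)
  show ?thesis using objective_if_WSE WSE_if_objective by blast
qed

end
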